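(* Let $S$ be a pairwise-intersecting double-interval society with $n\ge 1$ voters and approval number $a(S)$. Then $$a(S)\ \ge\ \left\lceil 2n+\tfrac12-\sqrt{3n^2-n+\tfrac14}\right\rceil,$$ so that $$\frac{a(S)}{n}\ \ge\ 2-\sqrt3+\frac{3+\sqrt3}{6n}-\frac{\sqrt3}{24n^2},$$ and equivalently $$n\ \le\ \left\lfloor 2a(S)-\tfrac32+\sqrt{3a(S)^2-5a(S)+\tfrac94}\right\rfloor.$$
   Context: A double-interval society consists of a finite set $V$ of $n$ voters, each voter $v$ having an approval set $A_v\subseteq\mathbb{R}$ that is the union of two disjoint bounded closed intervals. The society is pairwise-intersecting if $A_u\cap A_v\neq\emptyset$ for all voters $u,v$. For a point (platform) $p\in\mathbb{R}$, its approval number $a(p)$ is the number of voters $v$ with $p\in A_v$; the approval number of the society is $a(S)=\max_{p\in\mathbb{R}}a(p)$, and its approval ratio is $a(S)/n$. *)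

theory Defs
  imports "HOL-Analysis.Analysis"
begin

definition double_interval :: "real set \<Rightarrow> bool" where
  "double_interval S \<longleftrightarrow>
     (\<exists>a b c d. a \<le> b \<and> b < c \<and> c \<le> d \<and> S = {a..b} \<union> {c..d})"

definition double_interval_society :: "'v set \<Rightarrow> ('v \<Rightarrow> real set) \<Rightarrow> bool" where
  "double_interval_society V A \<longleftrightarrow> finite V \<and> (\<forall>v\<in>V. double_interval (A v))"

definition pairwise_intersecting :: "'v set \<Rightarrow> ('v \<Rightarrow> real set) \<Rightarrow> bool" where
  "pairwise_intersecting V A \<longleftrightarrow> (\<forall>u\<in>V. \<forall>v\<in>V. A u \<inter> A v \<noteq> {})"

definition approval :: "'v set \<Rightarrow> ('v \<Rightarrow> real set) \<Rightarrow> real \<Rightarrow> nat" where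
  "approval V A p = card {v\<in>V. p \<in> A v}"

definition approval_number :: "'v set \<Rightarrow> ('v \<Rightarrow> real set) \<Rightarrow> nat" where
  "approval_number V A = Max (range (approval V A))"

end

theory Submission
  imports Defs
begin

text \<open>
  Cut every approval set into its two intervals. This gives \<open>2n\<close> intervals, no point of which
  lies in more than \<open>a = a(S)\<close> of them. The interval with the largest left endpoint can only meet
  intervals containing that endpoint, so it meets at most \<open>min k (a - 1)\<close> of the remaining \<open>k\<close>;
  removing intervals one by one, the ordered pairs of distinct intersecting intervals number at most
  \<open>2 \<Sum>k<2n. min k (a - 1) = (a - 1)(4n - a)\<close>. As the society is pairwise intersecting, each of
  the \<open>n\<^sup>2 - n\<close> ordered pairs of distinct voters comes from such a pair of intervals. The three
  bounds are rearrangements of the resulting quadratic inequality \<open>n\<^sup>2 - n \<le> (a - 1)(4n - a)\<close>.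
\<close>

lemma double_sum_min_closed_form:
  "2 * real (\<Sum>k<m. min k b) =
     (if m \<le> b then real m * (real m - 1) else real b * (2 * real m - real b - 1))"
proof (induction m)
  case (Suc m)
  then show ?case
    by (cases "m = b") (auto simp: algebra_simps)
qed simp

definition intersecting_pairs :: "'i set \<Rightarrow> ('i \<Rightarrow> real) \<Rightarrow> ('i \<Rightarrow> real) \<Rightarrow> ('i \<times> 'i) set" where
  "intersecting_pairs X lo hi =
     {(x, y) \<in> X \<times> X. x \<noteq> y \<and> {lo x..hi x} \<inter> {lo y..hi y} \<noteq> {}}"

lemma finite_intersecting_pairs: "finite X \<Longrightarrow> finite (intersecting_pairs X lo hi)"
  unfolding intersecting_pairs_def by (rule finite_subset[of _ "X \<times> X"]) auto

lemma card_intersecting_pairs_remove_rightmost: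
  fixes lo hi :: "'i \<Rightarrow> real"
  assumes "finite X" "J \<in> X" "\<forall>x\<in>X. lo x \<le> lo J"
  defines "S \<equiv> {y \<in> X - {J}. lo J \<in> {lo y..hi y}}"
  shows "card (intersecting_pairs X lo hi) \<le> card (intersecting_pairs (X - {J}) lo hi) + 2 * card S"
proof -
  have "finite S"
    using assms(1) by (simp add: S_def)
  have "lo J \<in> {lo y..hi y}" if "y \<in> X" "{lo y..hi y} \<inter> {lo J..hi J} \<noteq> {}" for y
    using that assms(3) by auto
  then have "intersecting_pairs X lo hi \<subseteq>
      intersecting_pairs (X - {J}) lo hi \<union> Pair J ` S \<union> (\<lambda>y. (y, J)) ` S"
    unfolding intersecting_pairs_def S_def by (auto simp: Int_commute)
  then have "card (intersecting_pairs X lo hi) \<le>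
      card (intersecting_pairs (X - {J}) lo hi \<union> Pair J ` S \<union> (\<lambda>y. (y, J)) ` S)"
    using assms(1) \<open>finite S\<close> by (intro card_mono) (auto simp: finite_intersecting_pairs)
  also have "\<dots> \<le> card (intersecting_pairs (X - {J}) lo hi) + card (Pair J ` S) + card ((\<lambda>y. (y, J)) ` S)"
    by (meson card_Un_le add_le_mono le_trans order_refl)
  also have "\<dots> \<le> card (intersecting_pairs (X - {J}) lo hi) + 2 * card S"
    using card_image_le[OF \<open>finite S\<close>, of "Pair J"] card_image_le[OF \<open>finite S\<close>, of "\<lambda>y. (y, J)"]
    by linarith
  finally show ?thesis .
qed

lemma card_intersecting_pairs_le:
  fixes lo hi :: "'i \<Rightarrow> real"
  assumes "finite X" and "\<forall>x\<in>X. lo x \<le> hi x"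
    and depth: "\<And>p. card {x \<in> X. p \<in> {lo x..hi x}} \<le> a"
  shows "card (intersecting_pairs X lo hi) \<le> 2 * (\<Sum>k<card X. min k (a - 1))"
  using \<open>finite X\<close>
proof (induction rule: finite_remove_induct)
  case empty
  show ?case
    by (simp add: intersecting_pairs_def)
next
  case (remove Y)
  obtain J where J: "J \<in> Y" "\<forall>x\<in>Y. lo x \<le> lo J"
    using Max_in[of "lo ` Y"] Max_ge[of "lo ` Y"] remove.hyps(1,2) by fastforce
  define S where "S = {y \<in> Y - {J}. lo J \<in> {lo y..hi y}}"
  have "finite S"
    using remove.hyps(1) by (simp add: S_def)
  define m where "m = card (Y - {J})"
  have card_Y: "card Y = Suc m"
    unfolding m_def by (rule card_Suc_Diff1[OF remove.hyps(1) J(1), symmetric])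
  have "card S \<le> m"
    unfolding m_def using remove.hyps(1) by (intro card_mono) (auto simp: S_def)
  moreover have "card S \<le> a - 1"
  proof -
    have "insert J S \<subseteq> {x \<in> X. lo J \<in> {lo x..hi x}}"
      using J remove.hyps(3) assms(2) by (auto simp: S_def)
    then have "card (insert J S) \<le> card {x \<in> X. lo J \<in> {lo x..hi x}}"
      by (rule card_mono[rotated]) (simp add: assms(1))
    also have "\<dots> \<le> a"
      by (rule depth)
    finally show ?thesis
      using \<open>finite S\<close> by (simp add: S_def)
  qed
  moreover have "card (intersecting_pairs Y lo hi) \<le> card (intersecting_pairs (Y - {J}) lo hi) + 2 * card S"
    unfolding S_def by (rule card_intersecting_pairs_remove_rightmost[OF remove.hyps(1) J])
  ultimately show ?case
    using remove.IH[OF J(1)] unfolding card_Y m_def by simp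
qed

lemma double_interval_society_pieces:
  assumes "double_interval_society V A"
  obtains lo hi :: "'v \<times> bool \<Rightarrow> real"
  where "\<And>v s. v \<in> V \<Longrightarrow> lo (v, s) \<le> hi (v, s)"
    and "\<And>v. v \<in> V \<Longrightarrow> hi (v, False) < lo (v, True)"
    and "\<And>v. v \<in> V \<Longrightarrow> A v = (\<Union>s. {lo (v, s)..hi (v, s)})"
proof -
  have "\<forall>v\<in>V. \<exists>e :: bool \<Rightarrow> real \<times> real.
          (\<forall>s. fst (e s) \<le> snd (e s)) \<and> snd (e False) < fst (e True) \<and>
          A v = (\<Union>s. {fst (e s)..snd (e s)})"
  proof
    fix v assume "v \<in> V"
    then obtain a b c d where "a \<le> b" "b < c" "c \<le> d" "A v = {a..b} \<union> {c..d}"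
      using assms unfolding double_interval_society_def double_interval_def by blast
    then show "\<exists>e :: bool \<Rightarrow> real \<times> real.
          (\<forall>s. fst (e s) \<le> snd (e s)) \<and> snd (e False) < fst (e True) \<and>
          A v = (\<Union>s. {fst (e s)..snd (e s)})"
      by (intro exI[of _ "\<lambda>s. if s then (c, d) else (a, b)"]) (auto simp: UNIV_bool)
  qed
  then obtain e where "\<forall>v\<in>V. (\<forall>s. fst (e v s) \<le> snd (e v s)) \<and> snd (e v False) < fst (e v True) \<and>
          A v = (\<Union>s. {fst (e v s)..snd (e v s)})"
    by (rule bchoice[elim_format]) blast
  then show ?thesis
    by (intro that[of "\<lambda>(v, s). fst (e v s)" "\<lambda>(v, s). snd (e v s)"]) auto
qed

lemma approval_le_card: "finite V \<Longrightarrow> approval V A p \<le> card V"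
  unfolding approval_def by (intro card_mono) auto

lemma approval_le_approval_number: "finite V \<Longrightarrow> approval V A p \<le> approval_number V A"
  unfolding approval_number_def
  by (rule Max_ge) (auto intro: finite_subset[of _ "{..card V}"] simp: approval_le_card)

lemma approval_number_le_card: "finite V \<Longrightarrow> approval_number V A \<le> card V"
  unfolding approval_number_def
  by (rule Max.boundedI) (auto simp: approval_le_card intro: finite_subset[of _ "{..card V}"])

lemma approval_number_pos:
  assumes "finite V" "v \<in> V" "A v \<noteq> {}"
  shows "1 \<le> approval_number V A"
proof -
  obtain p where "p \<in> A v"
    using assms(3) by blast
  then have "0 < approval V A p"
    unfolding approval_def using assms(1,2) by (auto simp: card_gt_0_iff)
  then show ?thesis
    using approval_le_approval_number[OF assms(1), of A p] by linarith
qed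

lemma card_pieces_containing_le_approval:
  fixes lo hi :: "'v \<times> bool \<Rightarrow> real"
  assumes "finite V"
    and "\<And>v. v \<in> V \<Longrightarrow> hi (v, False) < lo (v, True)"
    and "\<And>v. v \<in> V \<Longrightarrow> A v = (\<Union>s. {lo (v, s)..hi (v, s)})"
  shows "card {x \<in> V \<times> UNIV. p \<in> {lo x..hi x}} \<le> approval V A p"
  unfolding approval_def
proof (rule card_inj_on_le[of fst])
  show "inj_on fst {x \<in> V \<times> UNIV. p \<in> {lo x..hi x}}"
  proof (rule inj_onI)
    fix x y
    assume "x \<in> {x \<in> V \<times> UNIV. p \<in> {lo x..hi x}}" "y \<in> {x \<in> V \<times> UNIV. p \<in> {lo x..hi x}}"
      and "fst x = fst y"
    then show "x = y"
      using assms(2)[of "fst x"] by (cases x; cases y; cases "snd x"; cases "snd y") auto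
  qed
  show "fst ` {x \<in> V \<times> UNIV. p \<in> {lo x..hi x}} \<subseteq> {v \<in> V. p \<in> A v}"
    using assms(3) by auto
qed (use assms(1) in simp)

lemma card_off_diagonal:
  assumes "finite V"
  shows "card {(u, v) \<in> V \<times> V. u \<noteq> v} = card V * card V - card V"
proof -
  have "{(u, v) \<in> V \<times> V. u \<noteq> v} = V \<times> V - (\<lambda>v. (v, v)) ` V"
    by auto
  moreover have "card ((\<lambda>v. (v, v)) ` V) = card V"
    by (simp add: card_image inj_on_def)
  moreover have "(\<lambda>v. (v, v)) ` V \<subseteq> V \<times> V"
    by auto
  ultimately show ?thesis
    using assms by (simp add: card_Diff_subset card_cartesian_product)
qed

lemma card_off_diagonal_le_intersecting_pieces:
  fixes lo hi :: "'v \<times> bool \<Rightarrow> real"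
  assumes "finite V" and "pairwise_intersecting V A"
    and pieces: "\<And>v. v \<in> V \<Longrightarrow> A v = (\<Union>s. {lo (v, s)..hi (v, s)})"
  shows "card V * card V - card V \<le> card (intersecting_pairs (V \<times> UNIV) lo hi)"
proof -
  have "{(u, v) \<in> V \<times> V. u \<noteq> v} \<subseteq> map_prod fst fst ` intersecting_pairs (V \<times> UNIV) lo hi"
  proof clarify
    fix u v assume "u \<in> V" "v \<in> V" "u \<noteq> v"
    then obtain p where "p \<in> A u" "p \<in> A v"
      using assms(2) unfolding pairwise_intersecting_def by blast
    then obtain s t where "p \<in> {lo (u, s)..hi (u, s)}" "p \<in> {lo (v, t)..hi (v, t)}"
      using pieces \<open>u \<in> V\<close> \<open>v \<in> V\<close> by blast
    then have "((u, s), (v, t)) \<in> intersecting_pairs (V \<times> UNIV) lo hi"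
      using \<open>u \<in> V\<close> \<open>v \<in> V\<close> \<open>u \<noteq> v\<close> by (auto simp: intersecting_pairs_def)
    then show "(u, v) \<in> map_prod fst fst ` intersecting_pairs (V \<times> UNIV) lo hi"
      by force
  qed
  then have "card {(u, v) \<in> V \<times> V. u \<noteq> v} \<le> card (intersecting_pairs (V \<times> UNIV) lo hi)"
    using \<open>finite V\<close> by (intro surj_card_le) (simp_all add: finite_intersecting_pairs)
  then show ?thesis
    using card_off_diagonal[OF \<open>finite V\<close>] by simp
qed

lemma approval_number_pair_count_bound:
  fixes V :: "'v set"
  assumes society: "double_interval_society V A"
    and intersecting: "pairwise_intersecting V A"
  defines "a \<equiv> approval_number V A"
  shows "card V * card V - card V \<le> 2 * (\<Sum>k<2 * card V. min k (a - 1))"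
proof -
  obtain lo hi :: "'v \<times> bool \<Rightarrow> real"
    where lo_hi: "\<And>v s. v \<in> V \<Longrightarrow> lo (v, s) \<le> hi (v, s)"
      and gap: "\<And>v. v \<in> V \<Longrightarrow> hi (v, False) < lo (v, True)"
      and pieces: "\<And>v. v \<in> V \<Longrightarrow> A v = (\<Union>s. {lo (v, s)..hi (v, s)})"
    using double_interval_society_pieces[OF society] by blast
  have "finite V"
    using society by (simp add: double_interval_society_def)
  define X where "X = V \<times> (UNIV :: bool set)"
  have "finite X" "card X = 2 * card V"
    using \<open>finite V\<close> by (simp_all add: X_def card_cartesian_product)
  have "card {x \<in> X. p \<in> {lo x..hi x}} \<le> a" for p
    using card_pieces_containing_le_approval[OF \<open>finite V\<close> gap pieces, of p]
      approval_le_approval_number[OF \<open>finite V\<close>, of A p]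
    unfolding X_def a_def by linarith
  then have "card (intersecting_pairs X lo hi) \<le> 2 * (\<Sum>k<2 * card V. min k (a - 1))"
    using card_intersecting_pairs_le[OF \<open>finite X\<close>, of lo hi a] lo_hi \<open>card X = 2 * card V\<close>
    by (auto simp: X_def)
  moreover have "card V * card V - card V \<le> card (intersecting_pairs X lo hi)"
    using card_off_diagonal_le_intersecting_pieces[OF \<open>finite V\<close> intersecting pieces]
    by (simp add: X_def)
  ultimately show ?thesis
    by linarith
qed

lemma approval_number_quadratic_bound:
  fixes V :: "'v set"
  assumes society: "double_interval_society V A"
    and intersecting: "pairwise_intersecting V A"
    and "card V = n" "n \<ge> 1"
  defines "a \<equiv> approval_number V A"
  shows "real n ^ 2 - real n \<le> (real a - 1) * (4 * real n - real a)"
proof -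
  have "finite V"
    using society by (simp add: double_interval_society_def)
  have "n * n - n \<le> 2 * (\<Sum>k<2 * n. min k (a - 1))"
    using approval_number_pair_count_bound[OF society intersecting] \<open>card V = n\<close> by (simp add: a_def)
  then have "real (n * n - n) \<le> real (2 * (\<Sum>k<2 * n. min k (a - 1)))"
    by (simp only: of_nat_le_iff)
  then have "real n ^ 2 - real n \<le> 2 * real (\<Sum>k<2 * n. min k (a - 1))"
    by (simp add: of_nat_diff power2_eq_square)
  moreover have "a \<le> n"
    using approval_number_le_card[OF \<open>finite V\<close>, of A] \<open>card V = n\<close> by (simp add: a_def)
  moreover have "1 \<le> a"
  proof -
    obtain v where "v \<in> V"
      using \<open>card V = n\<close> \<open>n \<ge> 1\<close> by (metis card.empty ex_in_conv not_one_le_zero)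
    moreover have "A v \<noteq> {}"
      using society \<open>v \<in> V\<close> unfolding double_interval_society_def double_interval_def by fastforce
    ultimately show ?thesis
      using approval_number_pos[OF \<open>finite V\<close>] by (simp add: a_def)
  qed
  moreover have "2 * real (\<Sum>k<2 * n. min k (a - 1)) = (real a - 1) * (4 * real n - real a)"
  proof -
    have "\<not> 2 * n \<le> a - 1"
      using \<open>a \<le> n\<close> \<open>n \<ge> 1\<close> by linarith
    then show ?thesis
      using double_sum_min_closed_form[where m = "2 * n" and b = "a - 1"] \<open>1 \<le> a\<close>
      by (simp add: of_nat_diff algebra_simps)
  qed
  ultimately show ?thesis
    by linarith
qed

lemma quadratic_bound_lower:
  fixes N r :: real
  assumes "N\<^sup>2 - N \<le> (r - 1) * (4 * N - r)"
  shows "2 * N + 1/2 - sqrt (3 * N\<^sup>2 - N + 1/4) \<le> r"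
proof -
  have "(2 * N + 1/2 - r)\<^sup>2 \<le> 3 * N\<^sup>2 - N + 1/4"
    using assms by (simp add: power2_eq_square algebra_simps)
  then show ?thesis
    using real_le_rsqrt by force
qed

lemma quadratic_bound_upper:
  fixes N r :: real
  assumes "N\<^sup>2 - N \<le> (r - 1) * (4 * N - r)"
  shows "N \<le> 2 * r - 3/2 + sqrt (3 * r\<^sup>2 - 5 * r + 9/4)"
proof -
  have "(N - (2 * r - 3/2))\<^sup>2 \<le> 3 * r\<^sup>2 - 5 * r + 9/4"
    using assms by (simp add: power2_eq_square algebra_simps)
  then show ?thesis
    using real_le_rsqrt by force
qed

lemma sqrt_quadratic_le_linear:
  fixes N :: real
  assumes "N > 0"
  shows "sqrt (3 * N\<^sup>2 - N + 1/4) \<le> sqrt 3 * (N - 1/6 + 1 / (24 * N))"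
proof (rule real_le_lsqrt)
  have "N - 1/6 + 1 / (24 * N) = ((12 * N - 1)\<^sup>2 + 5) / (144 * N)"
    using assms by (simp add: field_simps power2_eq_square)
  then show "0 \<le> sqrt 3 * (N - 1/6 + 1 / (24 * N))"
    using assms by simp
  have "(sqrt 3 * (N - 1/6 + 1 / (24 * N)))\<^sup>2 = 3 * (N - 1/6 + 1 / (24 * N))\<^sup>2"
    by (simp add: power_mult_distrib)
  also have "\<dots> = 3 * N\<^sup>2 - N + 1/4 + 3 * (1 / (24 * N) - 1/6)\<^sup>2"
    using assms by (simp add: field_simps power2_eq_square)
  finally show "3 * N\<^sup>2 - N + 1/4 \<le> (sqrt 3 * (N - 1/6 + 1 / (24 * N)))\<^sup>2"
    by simp
qed

lemma quadratic_bound_ratio: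
  fixes N r :: real
  assumes "N\<^sup>2 - N \<le> (r - 1) * (4 * N - r)" and "N > 0"
  shows "2 - sqrt 3 + (3 + sqrt 3) / (6 * N) - sqrt 3 / (24 * N\<^sup>2) \<le> r / N"
proof -
  have "2 * N + 1/2 - sqrt 3 * (N - 1/6 + 1 / (24 * N)) \<le> r"
    using quadratic_bound_lower[OF assms(1)] sqrt_quadratic_le_linear[OF assms(2)] by linarith
  then have "(2 * N + 1/2 - sqrt 3 * (N - 1/6 + 1 / (24 * N))) / N \<le> r / N"
    using assms(2) by (simp add: divide_right_mono)
  moreover have "(2 * N + 1/2 - sqrt 3 * (N - 1/6 + 1 / (24 * N))) / N =
      2 - sqrt 3 + (3 + sqrt 3) / (6 * N) - sqrt 3 / (24 * N\<^sup>2)"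
    using assms(2) by (simp add: field_simps power2_eq_square)
  ultimately show ?thesis
    by simp
qed

theorem theorem4p1:
  fixes V :: "'v set" and A :: "'v \<Rightarrow> real set" and n :: nat
  assumes "double_interval_society V A"
    and "pairwise_intersecting V A"
    and "card V = n" and "n \<ge> 1"
  shows "real (approval_number V A) \<ge> of_int \<lceil>2 * real n + 1/2 - sqrt (3 * (real n)^2 - real n + 1/4)\<rceil>
    \<and> real (approval_number V A) / real n \<ge>
        2 - sqrt 3 + (3 + sqrt 3) / (6 * real n) - sqrt 3 / (24 * (real n)^2)
    \<and> real n \<le> of_int \<lfloor>2 * real (approval_number V A) - 3/2
        + sqrt (3 * (real (approval_number V A))^2 - 5 * real (approval_number V A) + 9/4)\<rfloor>"
proof -
  let ?a = "real (approval_number V A)"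
  have key: "(real n)\<^sup>2 - real n \<le> (?a - 1) * (4 * real n - ?a)"
    using approval_number_quadratic_bound[OF assms] .
  have "\<lceil>2 * real n + 1/2 - sqrt (3 * (real n)\<^sup>2 - real n + 1/4)\<rceil> \<le> int (approval_number V A)"
    using quadratic_bound_lower[OF key] by (simp add: ceiling_le_iff)
  then have lower: "of_int \<lceil>2 * real n + 1/2 - sqrt (3 * (real n)\<^sup>2 - real n + 1/4)\<rceil> \<le> ?a"
    by (metis of_int_le_iff of_int_of_nat_eq)
  have "int n \<le> \<lfloor>2 * ?a - 3/2 + sqrt (3 * ?a\<^sup>2 - 5 * ?a + 9/4)\<rfloor>"
    using quadratic_bound_upper[OF key] by (simp add: le_floor_iff)
  then have upper: "real n \<le> of_int \<lfloor>2 * ?a - 3/2 + sqrt (3 * ?a\<^sup>2 - 5 * ?a + 9/4)\<rfloor>"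
    by (metis of_int_le_iff of_int_of_nat_eq)
  have "real n > 0"
    using \<open>n \<ge> 1\<close> by simp
  then show ?thesis
    using lower upper quadratic_bound_ratio[OF key] by simp
qed

end
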